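(* For every $\rho<0$, the harmonic map $\psi_\rho:\mathbb{CP}^n\to\mathbb{CP}^n$ is equivariantly weakly stable with respect to the $\mathrm{SU}(p+1)\times\mathrm{SU}(n-p)$-action, i.e. every $\lambda$ in its equivariant spectrum satisfies $\lambda\ge0$.
   Context: Let $n\ge1$ and $0\le p<n$ be integers. $\mathbb{CP}^n$ carries the Fubini–Study metric (the metric making $\mathbb S^{2n+1}\to\mathbb{CP}^n$ a Riemannian submersion). $G=\mathrm{SU}(p+1)\times\mathrm{SU}(n-p)$ acts isometrically by $(A,B)\cdot[Z]=[\operatorname{diag}(A,B)Z]$; with $\gamma(t)=[\cos t\,e_1+\sin t\,e_{p+2}]$ every point of $\mathbb{CP}^n$ is $g\cdot\gamma(t)$ for some $g\in G$, $t\in[0,\pi/2]$. For $\rho\ne0$ let $r_\rho(t)=\arctan(\rho\tan t)$ on $[0,\pi/2)$, $r_\rho(\pi/2)=\operatorname{sign}(\rho)\pi/2$, and $\psi_\rho(g\cdot\gamma(t))=g\cdot\gamma(r_\rho(t))$, a harmonic map. The equivariant spectrum of $\psi_\rho$ is the set of $\lambda\in\mathbb R$ for which the Sturm–Liouville problem \[ \ddot\xi+\big[(2n-2p-1)\cot t-(2p+1)\tan t\big]\dot\xi-\Big[2(n-p-1)\frac{\cos 2r_\rho(t)}{\sin^2t}-2p\frac{\cos2r_\rho(t)}{\cos^2t}+4\frac{\cos4r_\rho(t)}{\sin^22t}\Big]\xi+\lambda\xi=0 \] has a nonzero solution $\xi\in C^\infty_0([0,\tfrac\pi2])$ (smooth,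 vanishing at $0$ and $\pi/2$). $\psi_\rho$ is equivariantly weakly stable if all these $\lambda$ are $\ge0$. *)

theory Defs
  imports "HOL-Analysis.Analysis"
begin

definition r_fun :: "real \<Rightarrow> real \<Rightarrow> real" where
  "r_fun \<rho> t = (if t = pi / 2 then sgn \<rho> * (pi / 2) else arctan (\<rho> * tan t))"

definition smooth_on_closed :: "real \<Rightarrow> real \<Rightarrow> (real \<Rightarrow> real) \<Rightarrow> (nat \<Rightarrow> real \<Rightarrow> real) \<Rightarrow> bool" where
  "smooth_on_closed a b f D \<longleftrightarrow>
     (\<forall>t\<in>{a..b}. D 0 t = f t) \<and>
     (\<forall>k. \<forall>t\<in>{a..b}. (D k has_real_derivative D (Suc k) t) (at t within {a..b}))"

definition SL_potential :: "nat \<Rightarrow> nat \<Rightarrow> real \<Rightarrow> real \<Rightarrow> real" where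
  "SL_potential n p \<rho> t =
     2 * (real n - real p - 1) * cos (2 * r_fun \<rho> t) / (sin t)\<^sup>2
     - 2 * real p * cos (2 * r_fun \<rho> t) / (cos t)\<^sup>2
     + 4 * cos (4 * r_fun \<rho> t) / (sin (2 * t))\<^sup>2"

definition SL_drift :: "nat \<Rightarrow> nat \<Rightarrow> real \<Rightarrow> real" where
  "SL_drift n p t = (2 * real n - 2 * real p - 1) * cot t - (2 * real p + 1) * tan t"

text \<open>The equation is
  required on the open interval (0,pi/2), where its coefficients are defined.\<close>
definition equivariant_spectrum :: "nat \<Rightarrow> nat \<Rightarrow> real \<Rightarrow> real set" where
  "equivariant_spectrum n p \<rho> =
     {lam. \<exists>\<xi> D. smooth_on_closed 0 (pi / 2) \<xi> D \<and>
          \<xi> 0 = 0 \<and> \<xi> (pi / 2) = 0 \<and> (\<exists>t\<in>{0..pi/2}. \<xi> t \<noteq> 0) \<and>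
          (\<forall>t\<in>{0<..<pi/2}.
             D 2 t + SL_drift n p t * D 1 t - SL_potential n p \<rho> t * \<xi> t + lam * \<xi> t = 0)}"

definition equivariantly_weakly_stable :: "nat \<Rightarrow> nat \<Rightarrow> real \<Rightarrow> bool" where
  "equivariantly_weakly_stable n p \<rho> \<longleftrightarrow> (\<forall>lam\<in>equivariant_spectrum n p \<rho>. lam \<ge> 0)"

end

theory Submission
  imports Defs
begin

text \<open>
  Differentiating \<open>r\<^sub>\<rho>(t) = arctan (\<rho> tan t)\<close> in \<open>\<rho>\<close> gives the Jacobi field
  \<open>J(t) = sin t cos t / (cos\<^sup>2 t + \<rho>\<^sup>2 sin\<^sup>2 t)\<close>, which is positive on \<open>(0, \<pi>/2)\<close>,
  vanishes at both ends and solves the equation with \<open>\<lambda> = 0\<close>; equivalently, its logarithmic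
  derivative solves a Riccati equation.  As the potential is bounded below, for \<open>\<lambda> < 0\<close> the
  power \<open>J\<^sup>\<beta>\<close> with \<open>\<beta> < 1\<close> close to \<open>1\<close> is a strict supersolution.  An eigenfunction that is
  positive somewhere vanishes linearly at the ends, whereas \<open>J\<^sup>\<beta>\<close> vanishes only like \<open>t\<^sup>\<beta>\<close>, so
  \<open>\<xi> / J\<^sup>\<beta>\<close> attains a positive maximum \<open>M\<close> at an interior point.  There \<open>M J\<^sup>\<beta> - \<xi>\<close> has a
  minimum, and comparing second-order terms contradicts strictness.
\<close>

section \<open>Elementary real analysis\<close>

lemma sin_cos_gt_zero:
  assumes "0 < t" "t < pi/2"
  shows "sin t > 0" "cos t > 0"
  using assms by (auto intro: sin_gt_zero2 cos_gt_zero)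

lemma cos_double_arctan: "cos (2 * arctan x) = (1 - x^2) / (1 + x^2)"
proof -
  have "1 + x^2 > 0" by (simp add: add_pos_nonneg)
  then show ?thesis
    unfolding cos_double cos_arctan sin_arctan by (simp add: power_divide field_simps)
qed

lemma cos_quadruple: "cos (4 * x) = 2 * (cos (2 * x))^2 - 1" for x :: real
  using cos_double_cos[of "2 * x"] by simp

lemma cos_ge_half: "0 \<le> t \<Longrightarrow> t \<le> pi/3 \<Longrightarrow> 1/2 \<le> cos t"
  using cos_monotone_0_pi_le[of t "pi/3"] by (simp add: cos_60)

lemma sin_ge_half_self:
  assumes "0 \<le> t" "t \<le> pi/3"
  shows "t / 2 \<le> sin t"
proof (cases "t = 0")
  case False
  then have "0 < t" using assms by simp
  then obtain z where z: "0 < z" "z < t" "sin t - sin 0 = (t - 0) * cos z"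
    using MVT2[of 0 t sin cos] by (auto intro: DERIV_sin)
  have "t * (1/2) \<le> t * cos z"
    using cos_ge_half[of z] z assms by (intro mult_left_mono) auto
  then show ?thesis using z by simp
qed simp

lemma linear_less_powr_near_zero:
  fixes C A k \<beta> :: real
  assumes "C \<ge> 0" "A > 0" "k > 0" "0 < \<beta>" "\<beta> < 1"
  shows "\<exists>\<delta>>0. \<forall>y. 0 < y \<longrightarrow> y < \<delta> \<longrightarrow> C * y < A * (y / k) powr \<beta>"
proof -
  define B where "B = A / (k powr \<beta> * (C + 1))"
  have B: "B > 0" unfolding B_def using assms by auto
  have "C * y < A * (y / k) powr \<beta>" if y: "0 < y" "y < B powr (1 / (1 - \<beta>))" for y
  proof -
    have "y powr (1 - \<beta>) < (B powr (1 / (1 - \<beta>))) powr (1 - \<beta>)"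
      using y assms by (intro powr_less_mono2) auto
    also have "\<dots> = B" unfolding powr_powr using assms B by simp
    finally have small: "y powr (1 - \<beta>) < B" .
    have "C * y \<le> (C + 1) * (y powr (1 - \<beta>) * y powr \<beta>)"
      using y by (simp add: powr_add[symmetric])
    also have "\<dots> < (C + 1) * (B * y powr \<beta>)"
      using small y assms by (intro mult_strict_left_mono mult_strict_right_mono) auto
    also have "\<dots> = A * (y / k) powr \<beta>"
      unfolding B_def using assms y by (simp add: powr_divide)
    finally show ?thesis .
  qed
  then show ?thesis
    using B by (intro exI[of _ "B powr (1 / (1 - \<beta>))"]) auto
qed

lemma linear_bound_from_vanishing_ends:
  fixes u u' :: "real \<Rightarrow> real"
  assumes der: "\<forall>t\<in>{a..b}. (u has_real_derivative u' t) (at t within {a..b})"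
    and cont: "continuous_on {a..b} u'" and "u a = 0" "u b = 0"
  shows "\<exists>C\<ge>0. \<forall>t\<in>{a..b}. \<bar>u t\<bar> \<le> C * (t - a) \<and> \<bar>u t\<bar> \<le> C * (b - t)"
proof -
  obtain C where "C > 0" and C: "\<forall>x\<in>u' ` {a..b}. norm x \<le> C"
    using bounded_pos compact_imp_bounded[OF compact_continuous_image[OF cont compact_Icc]] by blast
  have lip: "norm (u x - u y) \<le> C * norm (x - y)" if "x \<in> {a..b}" "y \<in> {a..b}" for x y
    by (rule field_differentiable_bound[OF convex_box(1)]) (use der C that in auto)
  have "\<bar>u t\<bar> \<le> C * (t - a) \<and> \<bar>u t\<bar> \<le> C * (b - t)" if t: "t \<in> {a..b}" for t
    using lip[of t a] lip[of b t] t \<open>u a = 0\<close> \<open>u b = 0\<close> by auto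
  with \<open>C > 0\<close> show ?thesis by (intro exI[of _ C]) auto
qed

lemma ratio_attains_max_interior:
  fixes u \<phi> :: "real \<Rightarrow> real"
  assumes cont: "continuous_on {a<..<b} u" "continuous_on {a<..<b} \<phi>"
    and pos: "\<forall>t\<in>{a<..<b}. \<phi> t > 0"
    and "d > 0" and t1: "t1 \<in> {a<..<b}" "A * \<phi> t1 \<le> u t1"
    and ends: "\<forall>t\<in>{a<..<b}. t < a + d \<or> b - d < t \<longrightarrow> u t \<le> A * \<phi> t"
  shows "\<exists>t0\<in>{a<..<b}. \<exists>M\<ge>A. (\<forall>t\<in>{a<..<b}. u t \<le> M * \<phi> t) \<and> u t0 = M * \<phi> t0"
proof -
  define e where "e = min d (min (t1 - a) (b - t1))"
  define S where "S = {a + e..b - e}"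
  have e: "e > 0" "e \<le> d" using \<open>d > 0\<close> t1 by (auto simp: e_def)
  have t1S: "t1 \<in> S" using t1 by (auto simp: S_def e_def)
  have S: "S \<subseteq> {a<..<b}" using e by (auto simp: S_def)
  have "continuous_on S (\<lambda>t. u t / \<phi> t)"
    using continuous_on_subset[OF cont(1) S] continuous_on_subset[OF cont(2) S] pos S
    by (intro continuous_intros) (auto dest!: bspec[of _ _ "_"])
  then obtain t0 where t0: "t0 \<in> S" and max: "\<forall>t\<in>S. u t / \<phi> t \<le> u t0 / \<phi> t0"
    using continuous_attains_sup[of S "\<lambda>t. u t / \<phi> t"] t1S by (auto simp: S_def)
  define M where "M = u t0 / \<phi> t0"
  have "A \<le> u t1 / \<phi> t1" using t1 pos by (simp add: le_divide_eq)
  then have "A \<le> M" using max t1S by (force simp: M_def)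
  have "u t \<le> M * \<phi> t" if t: "t \<in> {a<..<b}" for t
  proof (cases "t \<in> S")
    case True
    then have "u t / \<phi> t \<le> M" using max unfolding M_def by blast
    then show ?thesis using pos t by (simp add: divide_le_eq)
  next
    case False
    then have "u t \<le> A * \<phi> t" using ends t e by (auto simp: S_def)
    also have "\<dots> \<le> M * \<phi> t" using \<open>A \<le> M\<close> pos t by (simp add: mult_right_mono)
    finally show ?thesis .
  qed
  moreover have "\<phi> t0 > 0" using pos t0 S by blast
  then have "u t0 = M * \<phi> t0" by (simp add: M_def)
  ultimately show ?thesis using t0 S \<open>A \<le> M\<close> by blast
qed

lemma DERIV_local_min_second_deriv_nonneg:
  fixes f f' :: "real \<Rightarrow> real"
  assumes "a < t0" "t0 < b"
    and local_min: "\<forall>t\<in>{a<..<b}. f t0 \<le> f t"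
    and f': "\<forall>t\<in>{a<..<b}. (f has_real_derivative f' t) (at t)"
    and f'': "(f' has_real_derivative f'') (at t0)"
    and "f' t0 = 0"
  shows "f'' \<ge> 0"
proof (rule ccontr)
  assume "\<not> f'' \<ge> 0"
  then obtain d where "d > 0" and dec: "\<forall>h>0. h < d \<longrightarrow> f' (t0 + h) < f' t0"
    using DERIV_neg_dec_right[OF f''] by force
  define h where "h = min (d/2) ((b - t0)/2)"
  have "h \<le> (b - t0)/2" "h \<le> d/2"
    unfolding h_def by (rule min.cobounded2, rule min.cobounded1)
  then have h: "0 < h" "h < d" "t0 + h < b"
    using \<open>d > 0\<close> assms(2) unfolding h_def by auto
  obtain z where z: "t0 < z" "z < t0 + h" "f (t0 + h) - f t0 = (t0 + h - t0) * f' z"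
    using MVT2[of t0 "t0 + h" f f'] h assms(1) f' by auto
  have "f' z < 0" using dec[rule_format, of "z - t0"] z h \<open>f' t0 = 0\<close> by auto
  then have "h * f' z < 0" using h(1) by (simp add: mult_pos_neg)
  then have "f (t0 + h) < f t0" using z(3) by simp
  moreover have "f t0 \<le> f (t0 + h)" using local_min h assms(1) by auto
  ultimately show False by simp
qed

lemma strict_supersolution_not_touching:
  fixes u u' \<phi> \<phi>' :: "real \<Rightarrow> real"
  assumes t0: "a < t0" "t0 < b" and "M > 0"
    and below: "\<forall>t\<in>{a<..<b}. u t \<le> M * \<phi> t" and touch: "u t0 = M * \<phi> t0"
    and u': "\<forall>t\<in>{a<..<b}. (u has_real_derivative u' t) (at t)"
    and \<phi>': "\<forall>t\<in>{a<..<b}. (\<phi> has_real_derivative \<phi>' t) (at t)"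
    and u'': "(u' has_real_derivative u'') (at t0)"
    and \<phi>'': "(\<phi>' has_real_derivative \<phi>'') (at t0)"
    and solution: "u'' + p * u' t0 + q * u t0 = 0"
    and supersolution: "\<phi>'' + p * \<phi>' t0 + q * \<phi> t0 < 0"
  shows False
proof -
  define h h' where "h = (\<lambda>t. M * \<phi> t - u t)" and "h' = (\<lambda>t. M * \<phi>' t - u' t)"
  have h': "\<forall>t\<in>{a<..<b}. (h has_real_derivative h' t) (at t)"
    using u' \<phi>' unfolding h_def h'_def by (auto intro!: derivative_eq_intros)
  have h'': "(h' has_real_derivative M * \<phi>'' - u'') (at t0)"
    unfolding h'_def by (intro DERIV_diff DERIV_cmult \<phi>'' u'')
  have min: "\<forall>t\<in>{a<..<b}. h t0 \<le> h t"
    using below touch unfolding h_def by auto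
  have "h' t0 = 0"
  proof (rule DERIV_local_min)
    show "(h has_real_derivative h' t0) (at t0)" using h' t0 by auto
    show "0 < min (t0 - a) (b - t0)" using t0 by auto
    show "\<forall>y. \<bar>t0 - y\<bar> < min (t0 - a) (b - t0) \<longrightarrow> h t0 \<le> h y"
      using min by (auto simp: abs_less_iff)
  qed
  then have "0 \<le> M * \<phi>'' - u''"
    using DERIV_local_min_second_deriv_nonneg[OF t0 min h' h''] by simp
  also have "M * \<phi>'' - u'' = M * (\<phi>'' + p * \<phi>' t0 + q * \<phi> t0)"
  proof -
    have "u' t0 = M * \<phi>' t0" using \<open>h' t0 = 0\<close> unfolding h'_def by simp
    then show ?thesis using solution touch by (simp add: algebra_simps)
  qed
  finally show False
    using mult_pos_neg[OF \<open>M > 0\<close> supersolution] by simp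
qed

lemma exists_exponent_near_one:
  fixes K lam :: real
  assumes "lam < 0" "0 \<le> K"
  shows "\<exists>\<beta>. 0 < \<beta> \<and> \<beta> < 1 \<and> (1 - \<beta>) * K + lam < 0"
proof -
  define e where "e = min (1/2) (- lam / (2 * (K + 1)))"
  have "0 < - lam / (2 * (K + 1))" using assms by (intro divide_pos_pos) auto
  then have e: "0 < e" "e < 1" unfolding e_def by auto
  have "e * (K + 1) \<le> - lam / (2 * (K + 1)) * (K + 1)"
    using assms unfolding e_def by (intro mult_right_mono) auto
  also have "\<dots> = - lam / 2"
    using assms by (simp add: field_simps)
  finally have "e * (K + 1) \<le> - lam / 2" .
  then have "e * K + lam < 0"
    using e assms by (simp add: algebra_simps)
  then show ?thesis
    using e by (intro exI[of _ "1 - e"]) simp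
qed

section \<open>The Jacobi field and its powers\<close>

definition jacobi_denom :: "real \<Rightarrow> real \<Rightarrow> real" where
  "jacobi_denom r t = cos t ^ 2 + r^2 * sin t ^ 2"

definition log_jacobi_field :: "real \<Rightarrow> real \<Rightarrow> real" where
  "log_jacobi_field r t = ln (sin t) + ln (cos t) - ln (jacobi_denom r t)"

definition log_jacobi_field' :: "real \<Rightarrow> real \<Rightarrow> real" where
  "log_jacobi_field' r t =
     cos t / sin t - sin t / cos t + 2 * (1 - r^2) * sin t * cos t / jacobi_denom r t"

definition log_jacobi_field'' :: "real \<Rightarrow> real \<Rightarrow> real" where
  "log_jacobi_field'' r t =
     - 1 / sin t ^ 2 - 1 / cos t ^ 2
     + 2 * (1 - r^2) * ((cos t ^ 2 - sin t ^ 2) / jacobi_denom r t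
                        + 2 * (1 - r^2) * sin t ^ 2 * cos t ^ 2 / (jacobi_denom r t)^2)"

lemma jacobi_denom_pos:
  assumes "0 < t" "t < pi/2"
  shows "jacobi_denom r t > 0"
  using sin_cos_gt_zero[OF assms] unfolding jacobi_denom_def by (simp add: add_pos_nonneg)

lemma jacobi_denom_le: "jacobi_denom r t \<le> 1 + r^2"
proof -
  have "sin t ^ 2 \<le> 1" "cos t ^ 2 \<le> 1"
    using sin_cos_squared_add[of t] zero_le_power2[of "sin t"] zero_le_power2[of "cos t"] by linarith+
  then show ?thesis
    unfolding jacobi_denom_def using mult_left_mono[of "sin t ^ 2" 1 "r^2"] by simp
qed

lemma jacobi_denom_has_derivative:
  "(jacobi_denom r has_real_derivative - 2 * (1 - r^2) * sin t * cos t) (at t)"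
  unfolding jacobi_denom_def[abs_def]
  by (rule derivative_eq_intros refl)+ (simp add: algebra_simps)

lemma log_jacobi_field_has_derivative:
  assumes "0 < t" "t < pi/2"
  shows "(log_jacobi_field r has_real_derivative log_jacobi_field' r t) (at t)"
proof -
  note pos = sin_cos_gt_zero[OF assms] jacobi_denom_pos[OF assms, of r]
  have "(log_jacobi_field r has_real_derivative
          1 / sin t * cos t + 1 / cos t * (- sin t)
          - 1 / jacobi_denom r t * (- 2 * (1 - r^2) * sin t * cos t)) (at t)"
    unfolding log_jacobi_field_def[abs_def]
    by (intro DERIV_diff DERIV_add DERIV_chain2[OF DERIV_ln_divide] DERIV_sin DERIV_cos
          jacobi_denom_has_derivative pos)
  then show ?thesis
    by (rule DERIV_cong) (use pos in \<open>simp add: log_jacobi_field'_def field_simps\<close>)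
qed

lemma log_jacobi_field'_has_derivative:
  assumes "0 < t" "t < pi/2"
  shows "(log_jacobi_field' r has_real_derivative log_jacobi_field'' r t) (at t)"
proof -
  note pos = sin_cos_gt_zero[OF assms] jacobi_denom_pos[OF assms, of r]
  have cot: "((\<lambda>x. cos x / sin x) has_real_derivative
      (- sin t * sin t - cos t * cos t) / sin t ^ Suc (Suc 0)) (at t)"
    using DERIV_quotient[OF DERIV_cos DERIV_sin, of t] pos by simp
  have tan: "((\<lambda>x. sin x / cos x) has_real_derivative
      (cos t * cos t - - sin t * sin t) / cos t ^ Suc (Suc 0)) (at t)"
    using DERIV_quotient[OF DERIV_sin DERIV_cos, of t] pos by simp
  have numerator: "((\<lambda>x. 2 * (1 - r^2) * sin x * cos x) has_real_derivative
      2 * (1 - r^2) * (cos t * cos t - sin t * sin t)) (at t)"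
    by (rule derivative_eq_intros refl)+ (simp add: algebra_simps)
  have "(log_jacobi_field' r has_real_derivative
          (- sin t * sin t - cos t * cos t) / sin t ^ Suc (Suc 0)
          - (cos t * cos t - - sin t * sin t) / cos t ^ Suc (Suc 0)
          + (2 * (1 - r^2) * (cos t * cos t - sin t * sin t) * jacobi_denom r t
             - - 2 * (1 - r^2) * sin t * cos t * (2 * (1 - r^2) * sin t * cos t))
            / jacobi_denom r t ^ Suc (Suc 0)) (at t)" (is "(_ has_real_derivative ?d) _")
    unfolding log_jacobi_field'_def[abs_def]
    using DERIV_add[OF DERIV_diff[OF cot tan]
        DERIV_quotient[OF numerator jacobi_denom_has_derivative]] pos by simp
  moreover have "?d = log_jacobi_field'' r t"
    using pos unfolding log_jacobi_field''_def
    by (simp add: field_simps power2_eq_square) (use sin_cos_squared_add[of t] in algebra)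
  ultimately show ?thesis by simp
qed

lemma cos_double_r_fun:
  assumes "0 < t" "t < pi/2"
  shows "cos (2 * r_fun r t) = (cos t ^ 2 - r^2 * sin t ^ 2) / jacobi_denom r t"
proof -
  note pos = sin_cos_gt_zero[OF assms]
  have "r_fun r t = arctan (r * tan t)"
    unfolding r_fun_def using assms by auto
  moreover have "1 - (r * tan t)^2 = (cos t ^ 2 - r^2 * sin t ^ 2) / cos t ^ 2"
    and "1 + (r * tan t)^2 = jacobi_denom r t / cos t ^ 2"
    using pos unfolding tan_def jacobi_denom_def by (simp_all add: field_simps power2_eq_square)
  ultimately show ?thesis
    using pos by (simp add: cos_double_arctan)
qed

lemma log_jacobi_field_riccati:
  assumes "0 < t" "t < pi/2"
  shows "log_jacobi_field'' r t + (log_jacobi_field' r t)^2 + SL_drift n p t * log_jacobi_field' r t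
         = SL_potential n p r t"
proof -
  define s c Q where "s = sin t" and "c = cos t" and "Q = jacobi_denom r t"
  have pos: "s > 0" "c > 0" "Q > 0"
    using sin_cos_gt_zero[OF assms] jacobi_denom_pos[OF assms] by (auto simp: s_def c_def Q_def)
  have Q: "Q = c^2 + r^2 * s^2" and sc: "s^2 + c^2 = 1"
    by (simp_all add: Q_def jacobi_denom_def s_def c_def)
  show ?thesis
    unfolding SL_potential_def SL_drift_def cos_quadruple cos_double_r_fun[OF assms] sin_double
      log_jacobi_field'_def log_jacobi_field''_def cot_def tan_def
      s_def[symmetric] c_def[symmetric] Q_def[symmetric]
    using pos by (simp add: field_simps) (use sc Q in algebra)
qed

definition SL_potential_bound :: "nat \<Rightarrow> nat \<Rightarrow> real \<Rightarrow> real" where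
  "SL_potential_bound n p r =
     2 * (real n - real p - 1) * (1 + r^2) + 2 * real p * (1 + 1/r^2) + 4 * r^2 * (1 + 1/r^2)^2"

lemma SL_potential_bound_nonneg: "p < n \<Longrightarrow> 0 \<le> SL_potential_bound n p r"
  unfolding SL_potential_bound_def by (intro add_nonneg_nonneg mult_nonneg_nonneg) auto

lemma potential_term_bounds:
  fixes s c r Q :: real
  assumes s: "s > 0" and c: "c > 0" and sc: "s^2 + c^2 = 1"
    and Q: "Q = c^2 + r^2 * s^2" and r: "r \<noteq> 0"
  shows "- (1 + r^2) \<le> (c^2 - r^2 * s^2) / Q / s^2"
    and "(c^2 - r^2 * s^2) / Q / c^2 \<le> 1 + 1/r^2"
    and "- (4 * r^2 * (1 + 1/r^2)^2) \<le> 4 * (2 * ((c^2 - r^2 * s^2) / Q)^2 - 1) / (2 * s * c)^2"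
proof -
  have r2: "r^2 > 0" using r by simp
  have "(1 + r^2) * Q - r^2 = c^2 + r^2 * r^2 * s^2" using sc Q by algebra
  moreover have "0 \<le> c^2 + r^2 * r^2 * s^2" by simp
  ultimately have "r^2 \<le> (1 + r^2) * Q" by linarith
  moreover have Qpos: "Q > 0" using Q c by (simp add: add_pos_nonneg)
  ultimately have r_Q: "r^2 / Q \<le> 1 + r^2" and inv_Q: "1 / Q \<le> 1 + 1/r^2"
    using r2 by (simp_all add: field_simps)
  have "(c^2 - r^2 * s^2) / Q / s^2 = c^2 / (Q * s^2) - r^2 / Q"
    using s Qpos by (simp add: field_simps)
  moreover have "0 \<le> c^2 / (Q * s^2)" using Qpos by simp
  ultimately show "- (1 + r^2) \<le> (c^2 - r^2 * s^2) / Q / s^2"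
    using r_Q by linarith
  have "(c^2 - r^2 * s^2) / Q / c^2 = 1 / Q - r^2 * s^2 / (Q * c^2)"
    using c Qpos by (simp add: field_simps)
  moreover have "0 \<le> r^2 * s^2 / (Q * c^2)" using Qpos by simp
  ultimately show "(c^2 - r^2 * s^2) / Q / c^2 \<le> 1 + 1/r^2"
    using inv_Q by linarith
  have "4 * (2 * ((c^2 - r^2 * s^2) / Q)^2 - 1) / (2 * s * c)^2
        = (c^2 - r^2 * s^2)^2 / (Q^2 * s^2 * c^2) - 4 * r^2 * (1/Q)^2"
    using s c Qpos by (simp add: field_simps power2_eq_square) (use Q sc in algebra)
  moreover have "0 \<le> (c^2 - r^2 * s^2)^2 / (Q^2 * s^2 * c^2)" by simp
  moreover have "4 * r^2 * (1/Q)^2 \<le> 4 * r^2 * (1 + 1/r^2)^2"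
    using inv_Q Qpos r2 by (intro mult_left_mono power_mono) auto
  ultimately show "- (4 * r^2 * (1 + 1/r^2)^2) \<le> 4 * (2 * ((c^2 - r^2 * s^2) / Q)^2 - 1) / (2 * s * c)^2"
    by linarith
qed

lemma SL_potential_ge:
  assumes "0 < t" "t < pi/2" "r \<noteq> 0" "p < n"
  shows "- SL_potential_bound n p r \<le> SL_potential n p r t"
proof -
  define s c Q where "s = sin t" and "c = cos t" and "Q = jacobi_denom r t"
  have pos: "s > 0" "c > 0"
    using sin_cos_gt_zero[OF assms(1,2)] by (auto simp: s_def c_def)
  have Q: "Q = c^2 + r^2 * s^2" and sc: "s^2 + c^2 = 1"
    by (simp_all add: Q_def jacobi_denom_def s_def c_def)
  note bounds = potential_term_bounds[OF pos sc Q assms(3)]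
  have "SL_potential n p r t
        = 2 * (real n - real p - 1) * ((c^2 - r^2 * s^2) / Q / s^2)
          - 2 * real p * ((c^2 - r^2 * s^2) / Q / c^2)
          + 4 * (2 * ((c^2 - r^2 * s^2) / Q)^2 - 1) / (2 * s * c)^2"
    unfolding SL_potential_def cos_quadruple cos_double_r_fun[OF assms(1,2)] sin_double
      s_def[symmetric] c_def[symmetric] Q_def[symmetric]
    by simp
  moreover have "- (2 * (real n - real p - 1) * (1 + r^2))
                 \<le> 2 * (real n - real p - 1) * ((c^2 - r^2 * s^2) / Q / s^2)"
    using mult_left_mono[OF bounds(1), of "2 * (real n - real p - 1)"] assms(4)
    by (simp only: mult_minus_right) simp
  moreover have "2 * real p * ((c^2 - r^2 * s^2) / Q / c^2) \<le> 2 * real p * (1 + 1/r^2)"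
    using bounds(2) by (intro mult_left_mono) auto
  ultimately show ?thesis
    using bounds(3) unfolding SL_potential_bound_def by linarith
qed

definition jacobi_power :: "real \<Rightarrow> real \<Rightarrow> real \<Rightarrow> real" where
  "jacobi_power \<beta> r t = exp (\<beta> * log_jacobi_field r t)"

definition jacobi_power' :: "real \<Rightarrow> real \<Rightarrow> real \<Rightarrow> real" where
  "jacobi_power' \<beta> r t = \<beta> * log_jacobi_field' r t * jacobi_power \<beta> r t"

definition jacobi_power'' :: "real \<Rightarrow> real \<Rightarrow> real \<Rightarrow> real" where
  "jacobi_power'' \<beta> r t =
     (\<beta> * log_jacobi_field'' r t + \<beta>^2 * (log_jacobi_field' r t)^2) * jacobi_power \<beta> r t"

lemma jacobi_power_pos: "jacobi_power \<beta> r t > 0"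
  unfolding jacobi_power_def by simp

lemma jacobi_power_has_derivative:
  assumes "0 < t" "t < pi/2"
  shows "(jacobi_power \<beta> r has_real_derivative jacobi_power' \<beta> r t) (at t)"
  using DERIV_chain2[OF DERIV_exp DERIV_cmult[OF log_jacobi_field_has_derivative[OF assms], of \<beta>]]
  unfolding jacobi_power_def[abs_def] jacobi_power'_def by (simp add: ac_simps)

lemma jacobi_power'_has_derivative:
  assumes "0 < t" "t < pi/2"
  shows "(jacobi_power' \<beta> r has_real_derivative jacobi_power'' \<beta> r t) (at t)"
proof -
  have "(jacobi_power' \<beta> r has_real_derivative
          \<beta> * log_jacobi_field'' r t * jacobi_power \<beta> r t
          + \<beta> * log_jacobi_field' r t * jacobi_power' \<beta> r t) (at t)"
    using DERIV_mult[OF DERIV_cmult[OF log_jacobi_field'_has_derivative[OF assms], of \<beta>]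
        jacobi_power_has_derivative[OF assms, of \<beta> r]]
    unfolding jacobi_power'_def[abs_def] by (simp add: ac_simps)
  then show ?thesis
    unfolding jacobi_power'_def jacobi_power''_def by (simp add: algebra_simps power2_eq_square)
qed

lemma jacobi_power_eq_powr:
  assumes "0 < t" "t < pi/2"
  shows "jacobi_power \<beta> r t = (sin t * cos t / jacobi_denom r t) powr \<beta>"
proof -
  note pos = sin_cos_gt_zero[OF assms] jacobi_denom_pos[OF assms, of r]
  have "log_jacobi_field r t = ln (sin t * cos t / jacobi_denom r t)"
    unfolding log_jacobi_field_def using pos by (simp add: ln_mult ln_div)
  then show ?thesis
    unfolding jacobi_power_def powr_def using pos by (simp add: mult.commute)
qed

lemma jacobi_power_strict_supersolution:
  assumes t: "0 < t" "t < pi/2" and "r \<noteq> 0" "p < n" and \<beta>: "0 < \<beta>" "\<beta> < 1"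
    and strict: "(1 - \<beta>) * SL_potential_bound n p r + lam < 0"
  shows "jacobi_power'' \<beta> r t + SL_drift n p t * jacobi_power' \<beta> r t
         - SL_potential n p r t * jacobi_power \<beta> r t + lam * jacobi_power \<beta> r t < 0"
proof -
  define V L where "V = SL_potential n p r t" and "L = log_jacobi_field' r t"
  have riccati: "log_jacobi_field'' r t = V - L^2 - SL_drift n p t * L"
    using log_jacobi_field_riccati[OF t, of r n p] unfolding V_def L_def by simp
  have "(\<beta> - 1) * V \<le> (1 - \<beta>) * SL_potential_bound n p r"
    using mult_left_mono[OF SL_potential_ge[OF t assms(3,4)], of "1 - \<beta>"] \<beta>
    unfolding V_def by (simp add: algebra_simps)
  moreover have "(\<beta>^2 - \<beta>) * L^2 \<le> 0"
    using \<beta> by (intro mult_nonpos_nonneg) (auto simp: power2_eq_square)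
  ultimately have "(\<beta> - 1) * V + (\<beta>^2 - \<beta>) * L^2 + lam < 0"
    using strict by linarith
  then have "((\<beta> - 1) * V + (\<beta>^2 - \<beta>) * L^2 + lam) * jacobi_power \<beta> r t < 0"
    using jacobi_power_pos by (rule mult_neg_pos)
  then show ?thesis
    unfolding jacobi_power''_def jacobi_power'_def riccati V_def[symmetric] L_def[symmetric]
    by (simp add: algebra_simps power2_eq_square)
qed

lemma jacobi_power_ge:
  assumes "0 < t" "t < pi/2" "0 \<le> \<beta>" "0 \<le> y" "y / 4 \<le> sin t * cos t"
  shows "(y / (4 * (1 + r^2))) powr \<beta> \<le> jacobi_power \<beta> r t"
proof -
  note pos = sin_cos_gt_zero[OF assms(1,2)] jacobi_denom_pos[OF assms(1,2), of r]
  have r: "1 + r^2 > 0" by (simp add: add_pos_nonneg)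
  have "y / (4 * (1 + r^2)) = (y / 4) / (1 + r^2)" by simp
  also have "\<dots> \<le> sin t * cos t / (1 + r^2)"
    by (rule divide_right_mono) (use assms r in auto)
  also have "\<dots> \<le> sin t * cos t / jacobi_denom r t"
    using pos jacobi_denom_le[of r t] by (intro divide_left_mono) auto
  finally show ?thesis
    unfolding jacobi_power_eq_powr[OF assms(1,2)] using assms r by (intro powr_mono2) auto
qed

lemma jacobi_power_ge_near_zero:
  assumes "0 < t" "t \<le> pi/3" "0 \<le> \<beta>"
  shows "(t / (4 * (1 + r^2))) powr \<beta> \<le> jacobi_power \<beta> r t"
proof (rule jacobi_power_ge)
  show "t / 4 \<le> sin t * cos t"
    using mult_mono[OF sin_ge_half_self cos_ge_half, of t t] sin_ge_zero[of t] assms by simp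
qed (use assms pi_gt_zero in auto)

lemma jacobi_power_ge_near_pi_half:
  assumes "0 < pi/2 - t" "pi/2 - t \<le> pi/3" "0 \<le> \<beta>"
  shows "((pi/2 - t) / (4 * (1 + r^2))) powr \<beta> \<le> jacobi_power \<beta> r t"
proof (rule jacobi_power_ge)
  have "sin t * cos t = cos (pi/2 - t) * sin (pi/2 - t)"
    by (simp add: sin_cos_eq[of t] cos_sin_eq[of t])
  then show "(pi/2 - t) / 4 \<le> sin t * cos t"
    using mult_mono[OF cos_ge_half sin_ge_half_self, of "pi/2 - t" "pi/2 - t"]
      cos_ge_half[of "pi/2 - t"] assms by simp
qed (use assms pi_gt_zero in auto)

lemma jacobi_power_dominates_near_ends:
  assumes \<beta>: "0 < \<beta>" "\<beta> < 1" and A: "A > 0" and "C \<ge> 0"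
    and bound: "\<forall>t\<in>{0..pi/2}. u t \<le> C * t \<and> u t \<le> C * (pi/2 - t)"
  shows "\<exists>d>0. \<forall>t\<in>{0<..<pi/2}. t < d \<or> pi/2 - d < t \<longrightarrow> u t \<le> A * jacobi_power \<beta> r t"
proof -
  have k: "4 * (1 + r^2) > 0" by (simp add: add_pos_nonneg)
  obtain \<delta> where \<delta>: "\<delta> > 0"
    and grow: "\<forall>y. 0 < y \<longrightarrow> y < \<delta> \<longrightarrow> C * y < A * (y / (4 * (1 + r^2))) powr \<beta>"
    using linear_less_powr_near_zero[OF \<open>C \<ge> 0\<close> A k \<beta>] by blast
  define d where "d = min \<delta> (pi/3)"
  have d: "d \<le> \<delta>" "d \<le> pi/3" "d > 0" using \<delta> by (auto simp: d_def)
  have "u t \<le> A * jacobi_power \<beta> r t"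
    if t: "0 < t" "t < pi/2" and near: "t < d \<or> pi/2 - d < t" for t
  proof (cases "t < d")
    case True
    have "u t \<le> C * t" using bound t by auto
    also have "\<dots> < A * (t / (4 * (1 + r^2))) powr \<beta>" using grow t True d by auto
    also have "\<dots> \<le> A * jacobi_power \<beta> r t"
      using jacobi_power_ge_near_zero[of t \<beta> r] True t \<beta> d
      by (intro mult_left_mono less_imp_le[OF A]) simp_all
    finally show ?thesis by simp
  next
    case False
    then have right: "pi/2 - t < d" using near by simp
    have "u t \<le> C * (pi/2 - t)" using bound t by auto
    also have "\<dots> < A * ((pi/2 - t) / (4 * (1 + r^2))) powr \<beta>"
      using grow t right d by auto
    also have "\<dots> \<le> A * jacobi_power \<beta> r t"
      using jacobi_power_ge_near_pi_half[of t \<beta> r] right t \<beta> d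
      by (intro mult_left_mono less_imp_le[OF A]) simp_all
    finally show ?thesis by simp
  qed
  with d show ?thesis by (intro exI[of _ d]) auto
qed

section \<open>No negative eigenvalues\<close>

lemma jacobi_power_multiple_touches:
  fixes u u' :: "real \<Rightarrow> real"
  assumes \<beta>: "0 < \<beta>" "\<beta> < 1"
    and u': "\<forall>t\<in>{0..pi/2}. (u has_real_derivative u' t) (at t within {0..pi/2})"
    and "continuous_on {0..pi/2} u'" and "u 0 = 0" "u (pi/2) = 0"
    and t1: "0 < t1" "t1 < pi/2" "u t1 > 0"
  shows "\<exists>t0\<in>{0<..<pi/2}. \<exists>M>0. (\<forall>t\<in>{0<..<pi/2}. u t \<le> M * jacobi_power \<beta> r t)
                                  \<and> u t0 = M * jacobi_power \<beta> r t0"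
proof -
  define \<phi> where "\<phi> = jacobi_power \<beta> r"
  obtain C where "C \<ge> 0" and C: "\<forall>t\<in>{0..pi/2}. \<bar>u t\<bar> \<le> C * (t - 0) \<and> \<bar>u t\<bar> \<le> C * (pi/2 - t)"
    using linear_bound_from_vanishing_ends[OF assms(3-6)] by blast
  define A where "A = u t1 / \<phi> t1"
  have "A > 0" using t1 jacobi_power_pos by (simp add: A_def \<phi>_def)
  have "\<forall>t\<in>{0..pi/2}. u t \<le> C * t \<and> u t \<le> C * (pi/2 - t)"
    using C by (auto dest: abs_le_D1)
  then obtain d where "d > 0"
    and ends: "\<forall>t\<in>{0<..<pi/2}. t < 0 + d \<or> pi/2 - d < t \<longrightarrow> u t \<le> A * \<phi> t"
    using jacobi_power_dominates_near_ends[OF \<beta> \<open>A > 0\<close> \<open>C \<ge> 0\<close>, of u r]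
    unfolding \<phi>_def by auto
  have "continuous_on {0..pi/2} u"
    using u' by (intro DERIV_continuous_on) auto
  then have "continuous_on {0<..<pi/2} u"
    by (rule continuous_on_subset) auto
  moreover have "continuous_on {0<..<pi/2} \<phi>"
    unfolding \<phi>_def using jacobi_power_has_derivative
    by (intro DERIV_continuous_on) (auto intro: has_field_derivative_at_within)
  moreover have "\<forall>t\<in>{0<..<pi/2}. \<phi> t > 0" by (simp add: \<phi>_def jacobi_power_pos)
  moreover have "t1 \<in> {0<..<pi/2}" using t1 by simp
  moreover have "A * \<phi> t1 \<le> u t1" using jacobi_power_pos[of \<beta> r t1] by (simp add: A_def \<phi>_def)
  ultimately obtain t0 M where "t0 \<in> {0<..<pi/2}" "M \<ge> A"
    "\<forall>t\<in>{0<..<pi/2}. u t \<le> M * \<phi> t" "u t0 = M * \<phi> t0"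
    using ratio_attains_max_interior[OF _ _ _ \<open>d > 0\<close> _ _ ends] by blast
  moreover have "M > 0" using \<open>A > 0\<close> \<open>M \<ge> A\<close> by simp
  ultimately show ?thesis unfolding \<phi>_def by blast
qed

lemma eigenfunction_nonpos_of_negative_eigenvalue:
  fixes u u' u'' :: "real \<Rightarrow> real"
  assumes "lam < 0" "r \<noteq> 0" "p < n"
    and u': "\<forall>t\<in>{0..pi/2}. (u has_real_derivative u' t) (at t within {0..pi/2})"
    and u'': "\<forall>t\<in>{0..pi/2}. (u' has_real_derivative u'' t) (at t within {0..pi/2})"
    and "u 0 = 0" "u (pi/2) = 0"
    and eigen: "\<forall>t\<in>{0<..<pi/2}.
                  u'' t + SL_drift n p t * u' t - SL_potential n p r t * u t + lam * u t = 0"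
    and t1: "0 < t1" "t1 < pi/2"
  shows "u t1 \<le> 0"
proof (rule ccontr)
  assume "\<not> u t1 \<le> 0"
  obtain \<beta> where \<beta>: "0 < \<beta>" "\<beta> < 1"
    and strict: "(1 - \<beta>) * SL_potential_bound n p r + lam < 0"
    using exists_exponent_near_one[OF \<open>lam < 0\<close> SL_potential_bound_nonneg[OF \<open>p < n\<close>]]
    by blast
  have "continuous_on {0..pi/2} u'"
    using u'' by (intro DERIV_continuous_on) auto
  moreover have "u t1 > 0" using \<open>\<not> u t1 \<le> 0\<close> by simp
  ultimately obtain t0 M where "t0 \<in> {0<..<pi/2}" "M > 0"
    and below: "\<forall>t\<in>{0<..<pi/2}. u t \<le> M * jacobi_power \<beta> r t"
    and touch: "u t0 = M * jacobi_power \<beta> r t0"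
    using jacobi_power_multiple_touches[OF \<beta> u' _ \<open>u 0 = 0\<close> \<open>u (pi/2) = 0\<close> t1] by blast
  then have t0: "0 < t0" "t0 < pi/2" by auto
  have interior_at: "at t within {0..pi/2} = at t" if "t \<in> {0<..<pi/2}" for t
    using that by (auto intro: at_within_Icc_at)
  have u'_at: "\<forall>t\<in>{0<..<pi/2}. (u has_real_derivative u' t) (at t)"
    and u''_at: "\<forall>t\<in>{0<..<pi/2}. (u' has_real_derivative u'' t) (at t)"
    using u' u'' by (metis interior_at greaterThanLessThan_subseteq_atLeastAtMost_iff order_refl
        subsetD)+
  show False
  proof (rule strict_supersolution_not_touching[OF t0 \<open>M > 0\<close> below touch u'_at])
    show "\<forall>t\<in>{0<..<pi/2}. (jacobi_power \<beta> r has_real_derivative jacobi_power' \<beta> r t) (at t)"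
      using jacobi_power_has_derivative by auto
    show "(u' has_real_derivative u'' t0) (at t0)" using u''_at t0 by auto
    show "(jacobi_power' \<beta> r has_real_derivative jacobi_power'' \<beta> r t0) (at t0)"
      using jacobi_power'_has_derivative t0 by blast
    show "u'' t0 + SL_drift n p t0 * u' t0 + (lam - SL_potential n p r t0) * u t0 = 0"
      using eigen t0 by (simp add: algebra_simps)
    show "jacobi_power'' \<beta> r t0 + SL_drift n p t0 * jacobi_power' \<beta> r t0
          + (lam - SL_potential n p r t0) * jacobi_power \<beta> r t0 < 0"
      using jacobi_power_strict_supersolution[OF t0 assms(2,3) \<beta> strict] by (simp add: algebra_simps)
  qed
qed

lemma eigenfunction_of_negative_eigenvalue_eq_zero:
  fixes u u' u'' :: "real \<Rightarrow> real"
  assumes "lam < 0" "r \<noteq> 0" "p < n"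
    and u': "\<forall>t\<in>{0..pi/2}. (u has_real_derivative u' t) (at t within {0..pi/2})"
    and u'': "\<forall>t\<in>{0..pi/2}. (u' has_real_derivative u'' t) (at t within {0..pi/2})"
    and "u 0 = 0" "u (pi/2) = 0"
    and eigen: "\<forall>t\<in>{0<..<pi/2}.
                  u'' t + SL_drift n p t * u' t - SL_potential n p r t * u t + lam * u t = 0"
    and t: "t \<in> {0..pi/2}"
  shows "u t = 0"
proof (cases "t = 0 \<or> t = pi/2")
  case False
  then have t: "0 < t" "t < pi/2" using t by auto
  have "u t \<le> 0"
    by (rule eigenfunction_nonpos_of_negative_eigenvalue[OF assms(1-8) t])
  moreover have "- u t \<le> 0"
  proof (rule eigenfunction_nonpos_of_negative_eigenvalue[OF assms(1-3) _ _ _ _ _ t])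
    show "\<forall>t\<in>{0..pi/2}. ((\<lambda>t. - u t) has_real_derivative - u' t) (at t within {0..pi/2})"
      using u' by (auto intro: DERIV_minus)
    show "\<forall>t\<in>{0..pi/2}. ((\<lambda>t. - u' t) has_real_derivative - u'' t) (at t within {0..pi/2})"
      using u'' by (auto intro: DERIV_minus)
    show "\<forall>t\<in>{0<..<pi/2}. - u'' t + SL_drift n p t * - u' t - SL_potential n p r t * - u t
                           + lam * - u t = 0"
      using eigen by (auto simp: algebra_simps)
  qed (use \<open>u 0 = 0\<close> \<open>u (pi/2) = 0\<close> in auto)
  ultimately show ?thesis by simp
qed (use \<open>u 0 = 0\<close> \<open>u (pi/2) = 0\<close> in \<open>elim disjE; simp only:\<close>)

theorem theorem6p2:
  fixes n p :: nat and \<rho> :: real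
  assumes "1 \<le> n" and "p < n" and "\<rho> < 0"
  shows "equivariantly_weakly_stable n p \<rho>"
  unfolding equivariantly_weakly_stable_def
proof
  fix lam assume "lam \<in> equivariant_spectrum n p \<rho>"
  then obtain \<xi> D where "smooth_on_closed 0 (pi/2) \<xi> D"
    and ends: "\<xi> 0 = 0" "\<xi> (pi/2) = 0" and nonzero: "\<exists>t\<in>{0..pi/2}. \<xi> t \<noteq> 0"
    and eigen: "\<forall>t\<in>{0<..<pi/2}.
                  D 2 t + SL_drift n p t * D 1 t - SL_potential n p \<rho> t * \<xi> t + lam * \<xi> t = 0"
    unfolding equivariant_spectrum_def by blast
  then have D0: "\<forall>t\<in>{0..pi/2}. D 0 t = \<xi> t"
    and D: "\<And>k. \<forall>t\<in>{0..pi/2}. (D k has_real_derivative D (Suc k) t) (at t within {0..pi/2})"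
    unfolding smooth_on_closed_def by auto
  have D1: "\<forall>t\<in>{0..pi/2}. (D 0 has_real_derivative D 1 t) (at t within {0..pi/2})"
    and D2: "\<forall>t\<in>{0..pi/2}. (D 1 has_real_derivative D 2 t) (at t within {0..pi/2})"
    using D[of 0] D[of 1] by (simp_all add: numeral_2_eq_2)
  show "lam \<ge> 0"
  proof (rule ccontr)
    assume "\<not> lam \<ge> 0"
    have "D 0 t = 0" if "t \<in> {0..pi/2}" for t
    proof (rule eigenfunction_of_negative_eigenvalue_eq_zero[OF _ _ \<open>p < n\<close> D1 D2 _ _ _ that])
      show "\<forall>t\<in>{0<..<pi/2}.
              D 2 t + SL_drift n p t * D 1 t - SL_potential n p \<rho> t * D 0 t + lam * D 0 t = 0"
        using eigen D0 by auto
    qed (use \<open>\<not> lam \<ge> 0\<close> \<open>\<rho> < 0\<close> ends D0 in auto)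
      \<comment> \<open>only \<open>\<rho> \<noteq> 0\<close> is used: the potential involves \<open>\<rho>\<close> only through \<open>\<rho>\<^sup>2\<close>\<close>
    then show False using nonzero D0 by auto
  qed
qed

end
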